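(* Let $G$ be a finite almost-median graph and $k\geqslant 0$ an integer. Then $G$ is $k$-regular if and only if $G\cong Q_k$.
   Context: All graphs are finite, simple and undirected. A subgraph $H$ of $G$ is isometric if $d_H(u,v)=d_G(u,v)$ for all $u,v\in V(H)$. A partial cube is a connected graph isomorphic to an isometric subgraph of some hypercube $Q_n$. In a partial cube, the Djoković–Winkler relation $\Theta$ on edges is: for edges $e=uv$, $f=xy$, $e\,\Theta\,f$ iff $d(u,x)+d(v,y)\neq d(u,y)+d(v,x)$; it is an equivalence relation, and $F_{uv}$ denotes the $\Theta$-class of $uv$. Let $W_{uv}=\{w\in V(G): d(u,w)<d(v,w)\}$ and $U_{uv}=\{w\in W_{uv}: w \text{ is incident with an edge of } F_{uv}\}$. A partial cube $G$ is an almost-median graph if for every edge $uv$ the subgraphs induced by $U_{uv}$ and by $U_{vu}$ are isometric subgraphs of $G$. $Q_k$ is the $k$-dimensional hypercube ($Q_0=K_1$). *)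

theory Defs
  imports Main "HOL-Library.Extended_Nat"
begin

definition simple_graph :: "'a set \<Rightarrow> ('a \<Rightarrow> 'a \<Rightarrow> bool) \<Rightarrow> bool" where
  "simple_graph V E \<longleftrightarrow> finite V \<and>
     (\<forall>x y. E x y \<longrightarrow> x \<in> V \<and> y \<in> V \<and> x \<noteq> y \<and> E y x)"

definition walk :: "'a set \<Rightarrow> ('a \<Rightarrow> 'a \<Rightarrow> bool) \<Rightarrow> 'a \<Rightarrow> 'a \<Rightarrow> nat \<Rightarrow> bool" where
  "walk V E u v n \<longleftrightarrow> (\<exists>xs. length xs = Suc n \<and> hd xs = u \<and> last xs = v \<and>
     set xs \<subseteq> V \<and> (\<forall>i<n. E (xs ! i) (xs ! Suc i)))"

text \<open>Graph distance (infinite if no walk exists).\<close>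

definition gdist :: "'a set \<Rightarrow> ('a \<Rightarrow> 'a \<Rightarrow> bool) \<Rightarrow> 'a \<Rightarrow> 'a \<Rightarrow> enat" where
  "gdist V E u v = Inf (enat ` {n. walk V E u v n})"

definition connected_graph :: "'a set \<Rightarrow> ('a \<Rightarrow> 'a \<Rightarrow> bool) \<Rightarrow> bool" where
  "connected_graph V E \<longleftrightarrow> (\<forall>u\<in>V. \<forall>v\<in>V. \<exists>n. walk V E u v n)"

definition isometric_subgraph ::
  "'a set \<Rightarrow> ('a \<Rightarrow> 'a \<Rightarrow> bool) \<Rightarrow> 'a set \<Rightarrow> ('a \<Rightarrow> 'a \<Rightarrow> bool) \<Rightarrow> bool" where
  "isometric_subgraph W F V E \<longleftrightarrow> W \<subseteq> V \<and>
     (\<forall>x y. F x y \<longrightarrow> x \<in> W \<and> y \<in> W \<and> E x y) \<and>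
     (\<forall>u\<in>W. \<forall>v\<in>W. gdist W F u v = gdist V E u v)"

definition induced :: "'a set \<Rightarrow> ('a \<Rightarrow> 'a \<Rightarrow> bool) \<Rightarrow> 'a \<Rightarrow> 'a \<Rightarrow> bool" where
  "induced W E x y \<longleftrightarrow> x \<in> W \<and> y \<in> W \<and> E x y"

definition graph_iso ::
  "'a set \<Rightarrow> ('a \<Rightarrow> 'a \<Rightarrow> bool) \<Rightarrow> 'b set \<Rightarrow> ('b \<Rightarrow> 'b \<Rightarrow> bool) \<Rightarrow> bool" where
  "graph_iso V E W F \<longleftrightarrow> (\<exists>f. bij_betw f V W \<and> (\<forall>u\<in>V. \<forall>v\<in>V. E u v \<longleftrightarrow> F (f u) (f v)))"

definition cube_V :: "nat \<Rightarrow> nat set set" where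
  "cube_V n = Pow {..<n}"

definition cube_E :: "nat \<Rightarrow> nat set \<Rightarrow> nat set \<Rightarrow> bool" where
  "cube_E n x y \<longleftrightarrow> x \<in> cube_V n \<and> y \<in> cube_V n \<and> card ((x - y) \<union> (y - x)) = 1"

definition partial_cube :: "'a set \<Rightarrow> ('a \<Rightarrow> 'a \<Rightarrow> bool) \<Rightarrow> bool" where
  "partial_cube V E \<longleftrightarrow> connected_graph V E \<and>
     (\<exists>n W F. isometric_subgraph W F (cube_V n) (cube_E n) \<and> graph_iso V E W F)"

definition Theta :: "'a set \<Rightarrow> ('a \<Rightarrow> 'a \<Rightarrow> bool) \<Rightarrow> 'a \<times> 'a \<Rightarrow> 'a \<times> 'a \<Rightarrow> bool" where
  "Theta V E e f \<longleftrightarrow> (case e of (u, v) \<Rightarrow> case f of (x, y) \<Rightarrow>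
     E u v \<and> E x y \<and>
     gdist V E u x + gdist V E v y \<noteq> gdist V E u y + gdist V E v x)"

definition W_set :: "'a set \<Rightarrow> ('a \<Rightarrow> 'a \<Rightarrow> bool) \<Rightarrow> 'a \<Rightarrow> 'a \<Rightarrow> 'a set" where
  "W_set V E u v = {w \<in> V. gdist V E u w < gdist V E v w}"

definition U_set :: "'a set \<Rightarrow> ('a \<Rightarrow> 'a \<Rightarrow> bool) \<Rightarrow> 'a \<Rightarrow> 'a \<Rightarrow> 'a set" where
  "U_set V E u v = {w \<in> W_set V E u v.
     \<exists>x y. Theta V E (u, v) (x, y) \<and> (w = x \<or> w = y)}"

definition almost_median :: "'a set \<Rightarrow> ('a \<Rightarrow> 'a \<Rightarrow> bool) \<Rightarrow> bool" where
  "almost_median V E \<longleftrightarrow> partial_cube V E \<and>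
     (\<forall>u v. E u v \<longrightarrow>
        isometric_subgraph (U_set V E u v) (induced (U_set V E u v) E) V E \<and>
        isometric_subgraph (U_set V E v u) (induced (U_set V E v u) E) V E)"

definition regular :: "'a set \<Rightarrow> ('a \<Rightarrow> 'a \<Rightarrow> bool) \<Rightarrow> nat \<Rightarrow> bool" where
  "regular V E k \<longleftrightarrow> (\<forall>v\<in>V. card {w \<in> V. E v w} = k)"

end

theory Submission
  imports Defs
begin

text \<open>Embed \<open>G\<close> isometrically into a hypercube, so that vertices become sets and
  \<open>\<Theta>\<close>-classes become coordinates. The almost-median condition then says that if \<open>p\<close> and
  \<open>q\<close> both carry an \<open>a\<close>-edge and lie on the same side of it, some neighbour \<open>p \<triangle> {e}\<close> of \<open>p\<close>
  towards \<open>q\<close> carries an \<open>a\<close>-edge as well. Consequently a walk that turns at every vertex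
  (no two consecutive edges on a common square) never repeats a coordinate. In a \<open>k\<close>-regular
  graph, on the other hand, a counting argument prolongs every turning walk indefinitely. As
  there are only finitely many coordinates, no turn exists at all: any two edges at a vertex
  span a square. Then the subcube spanned by the \<open>k\<close> coordinates available at one vertex is
  closed under taking neighbours, so by connectivity it is all of \<open>G\<close>.\<close>

section \<open>Walks and distances\<close>

lemma walk_0_iff: "walk V E u v 0 \<longleftrightarrow> u = v \<and> u \<in> V"
proof
  assume "walk V E u v 0"
  then obtain xs where "length xs = 1" "hd xs = u" "last xs = v" "set xs \<subseteq> V"
    unfolding walk_def by auto
  moreover from \<open>length xs = 1\<close> obtain x where "xs = [x]"
    by (metis One_nat_def length_0_conv length_Suc_conv)
  ultimately show "u = v \<and> u \<in> V" by auto
next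
  assume "u = v \<and> u \<in> V"
  then show "walk V E u v 0" unfolding walk_def by (intro exI[of _ "[u]"]) auto
qed

lemma walk_Suc_iff: "walk V E u v (Suc m) \<longleftrightarrow> u \<in> V \<and> (\<exists>w. E u w \<and> walk V E w v m)"
proof
  assume "walk V E u v (Suc m)"
  then obtain xs where xs: "length xs = Suc (Suc m)" "hd xs = u" "last xs = v" "set xs \<subseteq> V"
    "\<forall>i<Suc m. E (xs ! i) (xs ! Suc i)" unfolding walk_def by blast
  then obtain ys where "xs = u # ys" by (cases xs) auto
  with xs(1) have xys: "xs = u # ys" "ys \<noteq> []" by auto
  have "E u (hd ys)" using xs(5)[rule_format, of 0] xys by (simp add: hd_conv_nth)
  moreover have "walk V E (hd ys) v m"
    unfolding walk_def using xs xys by (intro exI[of _ ys]) auto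
  ultimately show "u \<in> V \<and> (\<exists>w. E u w \<and> walk V E w v m)" using xs xys by auto
next
  assume "u \<in> V \<and> (\<exists>w. E u w \<and> walk V E w v m)"
  then obtain w ys where u: "u \<in> V" "E u w" and ys: "length ys = Suc m" "hd ys = w" "last ys = v"
    "set ys \<subseteq> V" "\<forall>i<m. E (ys ! i) (ys ! Suc i)" unfolding walk_def by blast
  have "ys \<noteq> []" using ys by auto
  then have "\<forall>i<Suc m. E ((u # ys) ! i) ((u # ys) ! Suc i)"
    using ys u by (auto simp: hd_conv_nth less_Suc_eq_0_disj)
  then show "walk V E u v (Suc m)"
    unfolding walk_def using ys u by (intro exI[of _ "u # ys"]) auto
qed

lemma walk_endpoints: "walk V E u v m \<Longrightarrow> u \<in> V \<and> v \<in> V"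
  by (induction m arbitrary: u) (auto simp: walk_0_iff walk_Suc_iff)

lemma walk_mono:
  assumes "walk V E u v m" "V \<subseteq> V'" "\<And>x y. E x y \<Longrightarrow> E' x y"
  shows "walk V' E' u v m"
  using assms(1) by (induction m arbitrary: u) (use assms(2,3) in \<open>fastforce simp: walk_0_iff walk_Suc_iff\<close>)+

lemma gdist_le_walk: "walk V E u v m \<Longrightarrow> gdist V E u v \<le> enat m"
  unfolding gdist_def by (rule Inf_lower) auto

lemma le_gdistI: "(\<And>m. walk V E u v m \<Longrightarrow> d \<le> m) \<Longrightarrow> enat d \<le> gdist V E u v"
  unfolding gdist_def by (rule Inf_greatest) auto

lemma walk_if_gdist_eq: "gdist V E u v = enat d \<Longrightarrow> walk V E u v d"
proof -
  assume d: "gdist V E u v = enat d"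
  let ?A = "enat ` {n. walk V E u v n}"
  have "?A \<noteq> {}" using d unfolding gdist_def Inf_enat_def by (auto split: if_splits)
  then have "Inf ?A \<in> ?A" unfolding Inf_enat_def by (auto intro: LeastI)
  then show ?thesis using d unfolding gdist_def by auto
qed

lemma isometric_subgraph_first_step:
  assumes iso: "isometric_subgraph U (induced U E) V E" and "u \<in> U" "w \<in> U"
    and "gdist V E u w = enat (Suc m)"
  obtains y where "y \<in> U" "E u y" "gdist V E y w \<le> enat m"
proof -
  have "gdist U (induced U E) u w = gdist V E u w"
    using iso assms(2,3) unfolding isometric_subgraph_def by blast
  with assms(4) have "gdist U (induced U E) u w = enat (Suc m)" by simp
  then have "walk U (induced U E) u w (Suc m)" by (rule walk_if_gdist_eq)
  then obtain y where y: "induced U E u y" and y_w: "walk U (induced U E) y w m"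
    by (auto simp: walk_Suc_iff)
  have "U \<subseteq> V" using iso unfolding isometric_subgraph_def by blast
  then have "walk V E y w m" using walk_mono[OF y_w] by (auto simp: induced_def)
  then have "gdist V E y w \<le> enat m" by (rule gdist_le_walk)
  with y show ?thesis using that by (auto simp: induced_def)
qed

lemma walk_iso_iff:
  assumes bij: "bij_betw f V W" and iso: "\<And>u v. u \<in> V \<Longrightarrow> v \<in> V \<Longrightarrow> E u v \<longleftrightarrow> F (f u) (f v)"
    and E: "\<And>x y. E x y \<Longrightarrow> x \<in> V \<and> y \<in> V" and F: "\<And>x y. F x y \<Longrightarrow> x \<in> W \<and> y \<in> W"
    and "u \<in> V" "v \<in> V"
  shows "walk V E u v m \<longleftrightarrow> walk W F (f u) (f v) m"
  using \<open>u \<in> V\<close>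
proof (induction m arbitrary: u)
  case 0
  then show ?case using bij \<open>v \<in> V\<close> by (auto simp: walk_0_iff bij_betw_def inj_on_def)
next
  case (Suc m)
  have "(\<exists>w. E u w \<and> walk V E w v m) \<longleftrightarrow> (\<exists>z. F (f u) z \<and> walk W F z (f v) m)"
  proof
    assume "\<exists>w. E u w \<and> walk V E w v m"
    then show "\<exists>z. F (f u) z \<and> walk W F z (f v) m" using Suc iso E by blast
  next
    assume "\<exists>z. F (f u) z \<and> walk W F z (f v) m"
    then obtain z where z: "F (f u) z" "walk W F z (f v) m" by blast
    then obtain w where "w \<in> V" "z = f w" using F bij by (auto simp: bij_betw_def)
    then show "\<exists>w. E u w \<and> walk V E w v m" using Suc iso z by blast
  qed
  then show ?case using Suc.prems bij by (auto simp: walk_Suc_iff bij_betw_def)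
qed

lemma gdist_iso:
  assumes "bij_betw f V W" "\<And>u v. u \<in> V \<Longrightarrow> v \<in> V \<Longrightarrow> E u v \<longleftrightarrow> F (f u) (f v)"
    "\<And>x y. E x y \<Longrightarrow> x \<in> V \<and> y \<in> V" "\<And>x y. F x y \<Longrightarrow> x \<in> W \<and> y \<in> W"
    "u \<in> V" "v \<in> V"
  shows "gdist V E u v = gdist W F (f u) (f v)"
proof -
  have "{m. walk V E u v m} = {m. walk W F (f u) (f v) m}" using walk_iso_iff[of f V W E F, OF assms] by blast
  then show ?thesis unfolding gdist_def by simp
qed

lemma regular_iso_iff:
  assumes bij: "bij_betw f V W" and iso: "\<And>u v. u \<in> V \<Longrightarrow> v \<in> V \<Longrightarrow> E u v \<longleftrightarrow> F (f u) (f v)"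
  shows "regular V E k \<longleftrightarrow> regular W F k"
proof -
  have "card {w \<in> V. E v w} = card {y \<in> W. F (f v) y}" if "v \<in> V" for v
  proof -
    have "f ` {w \<in> V. E v w} = {y \<in> W. F (f v) y}"
      using bij iso that by (auto simp: bij_betw_def)
    moreover have "inj_on f {w \<in> V. E v w}"
      using bij by (auto simp: bij_betw_def intro: inj_on_subset)
    ultimately show ?thesis by (metis card_image)
  qed
  then show ?thesis using bij unfolding regular_def bij_betw_def by auto
qed

section \<open>Symmetric difference and the hypercube\<close>

text \<open>A constant rather than the library abbreviation \<open>sym_diff\<close>, so that the simplifier
  does not take the symmetric difference apart.\<close>

definition symdiff :: "'a set \<Rightarrow> 'a set \<Rightarrow> 'a set" where
  "symdiff A B = (A - B) \<union> (B - A)"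

lemma symdiff_assoc: "symdiff (symdiff A B) C = symdiff A (symdiff B C)"
  by (auto simp: symdiff_def)

lemma symdiff_commute: "symdiff A B = symdiff B A"
  by (auto simp: symdiff_def)

lemma symdiff_self [simp]: "symdiff A A = {}"
  and symdiff_empty [simp]: "symdiff A {} = A" "symdiff {} A = A"
  and symdiff_cancel [simp]: "symdiff A (symdiff A B) = B" "symdiff (symdiff A B) B = A"
    "symdiff (symdiff B A) B = A" "symdiff B (symdiff A B) = A"
  by (auto simp: symdiff_def)

lemma symdiff_eq_iff: "symdiff A B = C \<longleftrightarrow> B = symdiff A C"
  by (auto simp: symdiff_def)

lemma symdiff_subset_Un: "symdiff A B \<subseteq> A \<union> B"
  by (auto simp: symdiff_def)

lemma finite_symdiff: "finite A \<Longrightarrow> finite B \<Longrightarrow> finite (symdiff A B)"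
  by (auto simp: symdiff_def)

lemma symdiff_triangle: "symdiff A C \<subseteq> symdiff A B \<union> symdiff B C"
  by (auto simp: symdiff_def)

lemma symdiff_singleton_notin: "a \<notin> A \<Longrightarrow> symdiff A {a} = insert a A"
  by (auto simp: symdiff_def)

lemma symdiff_singleton_eq_iff [simp]: "symdiff A {a} = symdiff A {b} \<longleftrightarrow> a = b"
  by (auto simp: symdiff_def)

lemma card_symdiff_eq_1_iff: "card (symdiff A B) = 1 \<longleftrightarrow> (\<exists>a. B = symdiff A {a})"
  by (auto simp: card_Suc_eq symdiff_eq_iff)

lemma card_symdiff_singleton:
  assumes "finite A"
  shows "int (card (symdiff A {a})) = int (card A) + (if a \<in> A then -1 else 1)"
proof (cases "a \<in> A")
  case True
  then have "symdiff A {a} = A - {a}" by (auto simp: symdiff_def)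
  moreover have "card A > 0" using True assms card_gt_0_iff by blast
  ultimately show ?thesis using True assms by (simp add: card_Diff_singleton of_nat_diff)
qed (use assms in \<open>simp add: symdiff_singleton_notin\<close>)

lemma cube_E_iff: "cube_E n x y \<longleftrightarrow> x \<in> cube_V n \<and> y \<in> cube_V n \<and> card (symdiff x y) = 1"
  by (simp add: cube_E_def symdiff_def)

lemma card_symdiff_le_walk:
  assumes "walk W F x y m" "\<And>z. z \<in> W \<Longrightarrow> finite z" "\<And>u v. F u v \<Longrightarrow> card (symdiff u v) = 1"
  shows "card (symdiff x y) \<le> m"
  using assms(1)
proof (induction m arbitrary: x)
  case (Suc m)
  then obtain z where z: "x \<in> W" "F x z" "walk W F z y m" by (auto simp: walk_Suc_iff)
  have fin: "finite x" "finite y" "finite z" using z walk_endpoints[OF z(3)] assms(2) by auto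
  have "card (symdiff x y) \<le> card (symdiff x z \<union> symdiff z y)"
    using fin by (intro card_mono symdiff_triangle) (auto intro: finite_symdiff)
  also have "\<dots> \<le> card (symdiff x z) + card (symdiff z y)" by (rule card_Un_le)
  finally show ?case using Suc.IH[OF z(3)] assms(3)[OF z(2)] by simp
qed (simp add: walk_0_iff)

lemma walk_cube:
  assumes "finite D" "D \<subseteq> {..<n}" "x \<in> cube_V n"
  shows "walk (cube_V n) (cube_E n) x (symdiff x D) (card D)"
  using assms
proof (induction D arbitrary: x rule: finite_induct)
  case (insert d D)
  have x': "symdiff x {d} \<in> cube_V n" using insert.prems by (auto simp: cube_V_def symdiff_def)
  have "walk (cube_V n) (cube_E n) (symdiff x {d}) (symdiff (symdiff x {d}) D) (card D)"
    using insert.IH[OF _ x'] insert.prems by auto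
  moreover have "symdiff (symdiff x {d}) D = symdiff x (insert d D)"
    using insert.hyps by (auto simp: symdiff_def)
  moreover have "cube_E n x (symdiff x {d})" using x' insert.prems by (simp add: cube_E_iff)
  ultimately show ?case using insert.hyps insert.prems by (auto simp: walk_Suc_iff)
qed (simp add: walk_0_iff)

lemma gdist_cube:
  assumes "x \<in> cube_V n" "y \<in> cube_V n"
  shows "gdist (cube_V n) (cube_E n) x y = enat (card (symdiff x y))"
proof (rule antisym)
  have "symdiff x y \<subseteq> {..<n}" using assms by (auto simp: cube_V_def symdiff_def)
  then have "walk (cube_V n) (cube_E n) x y (card (symdiff x y))"
    using walk_cube[OF _ _ assms(1)] by (metis finite_lessThan finite_subset symdiff_cancel(1))
  then show "gdist (cube_V n) (cube_E n) x y \<le> enat (card (symdiff x y))" by (rule gdist_le_walk)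
  show "enat (card (symdiff x y)) \<le> gdist (cube_V n) (cube_E n) x y"
    by (rule le_gdistI, erule card_symdiff_le_walk)
      (auto simp: cube_V_def cube_E_iff intro: finite_subset)
qed

lemma regular_cube: "regular (cube_V k) (cube_E k) k"
  unfolding regular_def
proof
  fix x assume x: "x \<in> cube_V k"
  have "{y \<in> cube_V k. cube_E k x y} = (\<lambda>i. symdiff x {i}) ` {..<k}"
  proof (intro equalityI subsetI)
    fix y assume "y \<in> {y \<in> cube_V k. cube_E k x y}"
    then have "y \<subseteq> {..<k}" "card (symdiff x y) = 1" by (auto simp: cube_E_iff cube_V_def)
    moreover from this(2) obtain i where "y = symdiff x {i}"
      unfolding card_symdiff_eq_1_iff by blast
    moreover have "i \<in> x \<union> y" using \<open>y = symdiff x {i}\<close> by (auto simp: symdiff_def)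
    ultimately show "y \<in> (\<lambda>i. symdiff x {i}) ` {..<k}" using x by (auto simp: cube_V_def)
  qed (use x in \<open>auto simp: cube_V_def cube_E_iff\<close>, auto simp: symdiff_def)
  moreover have "inj_on (\<lambda>i. symdiff x {i}) {..<k}" by (simp add: inj_on_def)
  ultimately show "card {y \<in> cube_V k. cube_E k x y} = k" by (simp add: card_image)
qed

lemma card_symdiff_singletons_parallelogram:
  assumes "finite S"
  shows "card S + card (symdiff (symdiff S {a}) {b}) = card (symdiff S {a}) + card (symdiff S {b})
    \<longleftrightarrow> a \<noteq> b"
proof (cases "a = b")
  case True
  then show ?thesis using card_symdiff_singleton[OF assms, of a] by (cases "a \<in> S") auto
next
  case False
  then have "b \<in> symdiff S {a} \<longleftrightarrow> b \<in> S" by (auto simp: symdiff_def)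
  then show ?thesis
    using False card_symdiff_singleton[OF assms, of a] card_symdiff_singleton[OF assms, of b]
      card_symdiff_singleton[OF finite_symdiff[OF assms], of "{a}" b]
    by simp
qed

section \<open>Coordinates of a partial cube\<close>

locale cube_coords =
  fixes V :: "'a set" and E :: "'a \<Rightarrow> 'a \<Rightarrow> bool"
    and \<phi> :: "'a \<Rightarrow> nat set" and W :: "nat set set" and n :: nat
  assumes bij: "bij_betw \<phi> V W" and W_subset: "W \<subseteq> cube_V n"
    and adj_iff: "\<And>u v. u \<in> V \<Longrightarrow> v \<in> V \<Longrightarrow> E u v \<longleftrightarrow> card (symdiff (\<phi> u) (\<phi> v)) = 1"
    and gdist_eq: "\<And>u v. u \<in> V \<Longrightarrow> v \<in> V \<Longrightarrow> gdist V E u v = enat (card (symdiff (\<phi> u) (\<phi> v)))"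
    and edge_vertices: "\<And>x y. E x y \<Longrightarrow> x \<in> V \<and> y \<in> V"

lemma partial_cube_coords:
  assumes sg: "simple_graph V E" and pc: "partial_cube V E"
  obtains \<phi> W n where "cube_coords V E \<phi> W n"
proof -
  from pc obtain n W F \<phi> where iso: "isometric_subgraph W F (cube_V n) (cube_E n)"
    and bij: "bij_betw \<phi> V W" and \<phi>: "\<And>u v. u \<in> V \<Longrightarrow> v \<in> V \<Longrightarrow> E u v \<longleftrightarrow> F (\<phi> u) (\<phi> v)"
    unfolding partial_cube_def graph_iso_def by blast
  have W: "W \<subseteq> cube_V n" and F: "\<And>x y. F x y \<Longrightarrow> x \<in> W \<and> y \<in> W \<and> cube_E n x y"
    using iso unfolding isometric_subgraph_def by auto
  have gdist_W: "gdist W F x y = enat (card (symdiff x y))" if "x \<in> W" "y \<in> W" for x y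
    using iso that W gdist_cube[of x n y] unfolding isometric_subgraph_def by auto
  have F_iff: "F x y \<longleftrightarrow> card (symdiff x y) = 1" if "x \<in> W" "y \<in> W" for x y
  proof
    assume "card (symdiff x y) = 1"
    then have "walk W F x y (Suc 0)" using gdist_W that by (intro walk_if_gdist_eq) simp
    then show "F x y" by (auto simp: walk_Suc_iff walk_0_iff)
  qed (use F in \<open>auto simp: cube_E_iff\<close>)
  have E: "\<And>x y. E x y \<Longrightarrow> x \<in> V \<and> y \<in> V" using sg unfolding simple_graph_def by blast
  have \<phi>_W: "\<phi> u \<in> W" if "u \<in> V" for u using bij that by (auto simp: bij_betw_def)
  show ?thesis
  proof (rule that, unfold_locales)
    show "E u v \<longleftrightarrow> card (symdiff (\<phi> u) (\<phi> v)) = 1" if "u \<in> V" "v \<in> V" for u v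
      using \<phi> F_iff \<phi>_W that by simp
    show "gdist V E u v = enat (card (symdiff (\<phi> u) (\<phi> v)))" if "u \<in> V" "v \<in> V" for u v
      using gdist_iso[of \<phi> V W E F, OF bij \<phi> E] F gdist_W \<phi>_W that by simp
  qed (use bij W E in auto)
qed

context cube_coords
begin

lemma coord_in_W: "u \<in> V \<Longrightarrow> \<phi> u \<in> W"
  using bij by (auto simp: bij_betw_def)

lemma obtain_vertex:
  assumes "p \<in> W"
  obtains u where "u \<in> V" "\<phi> u = p"
  using bij assms by (auto simp: bij_betw_def)

lemma finite_coord: "p \<in> W \<Longrightarrow> finite p"
  using W_subset by (auto simp: cube_V_def intro: finite_subset)

lemma regular_iff_regular_W: "regular V E k \<longleftrightarrow> regular W (\<lambda>p q. card (symdiff p q) = 1) k"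
  using regular_iso_iff[of \<phi> V W E "\<lambda>p q. card (symdiff p q) = 1"] bij adj_iff by blast

lemma Theta_iff:
  assumes "u \<in> V" "v \<in> V" "x \<in> V" "y \<in> V"
    and "\<phi> v = symdiff (\<phi> u) {a}" "\<phi> y = symdiff (\<phi> x) {b}"
  shows "Theta V E (u, v) (x, y) \<longleftrightarrow> a = b"
proof -
  let ?S = "symdiff (\<phi> u) (\<phi> x)"
  have "E u v" "E x y" using adj_iff assms by simp_all
  moreover have "symdiff (\<phi> v) (\<phi> y) = symdiff (symdiff ?S {a}) {b}"
    "symdiff (\<phi> u) (\<phi> y) = symdiff ?S {b}" "symdiff (\<phi> v) (\<phi> x) = symdiff ?S {a}"
    unfolding assms(5,6) by (auto simp: symdiff_def)
  ultimately have "Theta V E (u, v) (x, y) \<longleftrightarrow>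
      card ?S + card (symdiff (symdiff ?S {a}) {b}) \<noteq> card (symdiff ?S {b}) + card (symdiff ?S {a})"
    unfolding Theta_def using gdist_eq assms(1-4) by simp
  also have "\<dots> \<longleftrightarrow> a = b"
    using card_symdiff_singletons_parallelogram[of ?S a b] assms(1,3)
    by (simp add: add.commute finite_symdiff finite_coord coord_in_W)
  finally show ?thesis .
qed

end

text \<open>The almost-median condition in coordinates: if \<open>p\<close> and \<open>q\<close> both carry an edge of the
  \<open>\<Theta>\<close>-class of coordinate \<open>a\<close> and lie on the same side of it, they lie in the same set \<open>U\<close>,
  and a geodesic from \<open>p\<close> to \<open>q\<close> inside \<open>U\<close> starts with an edge \<open>p\<close>--\<open>p \<triangle> {e}\<close> whose
  end again carries an \<open>a\<close>-edge.\<close>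

definition geodesic_boundaries :: "'a set set \<Rightarrow> bool" where
  "geodesic_boundaries W \<longleftrightarrow> (\<forall>p q a. p \<in> W \<longrightarrow> symdiff p {a} \<in> W \<longrightarrow> q \<in> W \<longrightarrow>
     symdiff q {a} \<in> W \<longrightarrow> a \<notin> symdiff p q \<longrightarrow> p \<noteq> q \<longrightarrow>
     (\<exists>e \<in> symdiff p q. symdiff p {e} \<in> W \<and> symdiff (symdiff p {e}) {a} \<in> W))"

lemma geodesic_boundariesD:
  assumes "geodesic_boundaries W" "p \<in> W" "symdiff p {a} \<in> W" "q \<in> W" "symdiff q {a} \<in> W"
    "a \<notin> symdiff p q" "p \<noteq> q"
  obtains e where "e \<in> symdiff p q" "symdiff p {e} \<in> W" "symdiff (symdiff p {e}) {a} \<in> W"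
  using assms unfolding geodesic_boundaries_def by blast

context cube_coords
begin

lemma mem_U_set:
  assumes "u \<in> V" "v \<in> V" "x \<in> V" "\<phi> v = symdiff (\<phi> u) {a}"
    and "a \<notin> symdiff (\<phi> u) (\<phi> x)" "symdiff (\<phi> x) {a} \<in> W"
  shows "x \<in> U_set V E u v"
proof -
  obtain y where y: "y \<in> V" "\<phi> y = symdiff (\<phi> x) {a}" using assms(6) by (rule obtain_vertex)
  have "Theta V E (u, v) (x, y)" using Theta_iff[OF assms(1-3) y(1) assms(4) y(2)] by simp
  moreover have "symdiff (\<phi> v) (\<phi> x) = insert a (symdiff (\<phi> u) (\<phi> x))"
    using assms(4,5) by (auto simp: symdiff_def)
  then have "gdist V E u x < gdist V E v x"
    using assms(1-3,5) by (simp add: gdist_eq finite_symdiff finite_coord coord_in_W)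
  ultimately show ?thesis using assms(3) unfolding U_set_def W_set_def by blast
qed

lemma U_set_partner:
  assumes "u \<in> V" "v \<in> V" "\<phi> v = symdiff (\<phi> u) {a}" "y \<in> U_set V E u v"
  shows "symdiff (\<phi> y) {a} \<in> W"
proof -
  from assms(4) obtain x1 y1 where th: "Theta V E (u, v) (x1, y1)" and "y = x1 \<or> y = y1"
    unfolding U_set_def by blast
  moreover from th have "E x1 y1" unfolding Theta_def prod.case by (elim conjE)
  then have x1y1: "x1 \<in> V" "y1 \<in> V" using edge_vertices by blast+
  moreover have "card (symdiff (\<phi> x1) (\<phi> y1)) = 1" using adj_iff[OF x1y1] \<open>E x1 y1\<close> by blast
  then obtain b where b: "\<phi> y1 = symdiff (\<phi> x1) {b}" unfolding card_symdiff_eq_1_iff by blast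
  moreover have "a = b" using Theta_iff[OF assms(1,2) x1y1 assms(3) b] th by blast
  ultimately show ?thesis using coord_in_W[OF x1y1(1)] coord_in_W[OF x1y1(2)] by (elim disjE) simp_all
qed

lemma geodesic_boundaries_W:
  assumes "almost_median V E"
  shows "geodesic_boundaries W"
  unfolding geodesic_boundaries_def
proof (intro allI impI)
  fix p q a
  assume p: "p \<in> W" "symdiff p {a} \<in> W" and q: "q \<in> W" "symdiff q {a} \<in> W"
    and a: "a \<notin> symdiff p q" and "p \<noteq> q"
  obtain u where u: "u \<in> V" "\<phi> u = p" using p(1) by (rule obtain_vertex)
  obtain v where v: "v \<in> V" "\<phi> v = symdiff p {a}" using p(2) by (rule obtain_vertex)
  obtain w where w: "w \<in> V" "\<phi> w = q" using q(1) by (rule obtain_vertex)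
  let ?U = "U_set V E u v" and ?S = "symdiff p q"
  have uU: "u \<in> ?U" using mem_U_set[OF u(1) v(1) u(1)] u v p by simp
  have wU: "w \<in> ?U" using mem_U_set[OF u(1) v(1) w(1)] u v w q a by simp
  have "E u v" using adj_iff[OF u(1) v(1)] u(2) v(2) by simp
  then have iso: "isometric_subgraph ?U (induced ?U E) V E"
    using assms unfolding almost_median_def by blast
  have "?S \<noteq> {}" using \<open>p \<noteq> q\<close> by (auto simp: symdiff_def)
  moreover have fin_S: "finite ?S" using p(1) q(1) finite_coord finite_symdiff by blast
  ultimately obtain m where m: "card ?S = Suc m" by (cases "card ?S") auto
  then have "gdist V E u w = enat (Suc m)" using gdist_eq[OF u(1) w(1)] u(2) w(2) by simp
  then obtain y where y: "y \<in> ?U" "E u y" "gdist V E y w \<le> enat m"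
    by (rule isometric_subgraph_first_step[OF iso uU wU])
  then have "y \<in> V" using edge_vertices by blast
  then have dist_yw: "card (symdiff (\<phi> y) q) \<le> m" using gdist_eq[OF _ w(1)] w(2) y(3) by simp
  have "card (symdiff p (\<phi> y)) = 1" using adj_iff[OF u(1) \<open>y \<in> V\<close>] y(2) u(2) by simp
  then obtain e where e: "\<phi> y = symdiff p {e}" unfolding card_symdiff_eq_1_iff by blast
  have "e \<in> ?S"
  proof (rule ccontr)
    assume "e \<notin> ?S"
    then have "symdiff (\<phi> y) q = insert e ?S" using e by (auto simp: symdiff_def)
    then show False using dist_yw m fin_S \<open>e \<notin> ?S\<close> by simp
  qed
  moreover have "symdiff (\<phi> y) {a} \<in> W" using U_set_partner[OF u(1) v(1) _ y(1)] u(2) v(2) by simp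
  ultimately show "\<exists>e \<in> ?S. symdiff p {e} \<in> W \<and> symdiff (symdiff p {e}) {a} \<in> W"
    using e coord_in_W[OF \<open>y \<in> V\<close>] by auto
qed

lemma W_eq_if_closed:
  assumes "connected_graph V E" "P \<subseteq> W" "p \<in> P"
    and closed: "\<And>x q. x \<in> P \<Longrightarrow> q \<in> W \<Longrightarrow> card (symdiff x q) = 1 \<Longrightarrow> q \<in> P"
  shows "W = P"
proof
  have walk_closed: "\<phi> y \<in> P" if "walk V E x y m" "\<phi> x \<in> P" for x y m
    using that
  proof (induction m arbitrary: x)
    case (Suc m)
    then obtain z where z: "x \<in> V" "E x z" "walk V E z y m" by (auto simp: walk_Suc_iff)
    then have "z \<in> V" using edge_vertices by blast
    with z have "card (symdiff (\<phi> x) (\<phi> z)) = 1" using adj_iff by blast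
    then have "\<phi> z \<in> P" using closed[OF Suc.prems(2) coord_in_W[OF \<open>z \<in> V\<close>]] by blast
    then show ?case using Suc.IH z(3) by blast
  qed (simp add: walk_0_iff)
  obtain u0 where u0: "u0 \<in> V" "\<phi> u0 = p" using assms(2,3) obtain_vertex by blast
  show "W \<subseteq> P"
  proof
    fix q assume "q \<in> W"
    then obtain w where "w \<in> V" "\<phi> w = q" by (rule obtain_vertex)
    moreover obtain m where "walk V E u0 w m"
      using assms(1) u0(1) \<open>w \<in> V\<close> unfolding connected_graph_def by blast
    ultimately show "q \<in> P" using walk_closed u0 assms(3) by blast
  qed
qed (use assms(2) in simp)

lemma graph_iso_cubeI:
  assumes "bij_betw \<psi> W (cube_V k)"
    and "\<And>x y. x \<in> W \<Longrightarrow> y \<in> W \<Longrightarrow> card (symdiff (\<psi> x) (\<psi> y)) = card (symdiff x y)"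
  shows "graph_iso V E (cube_V k) (cube_E k)"
  unfolding graph_iso_def
proof (intro exI conjI ballI)
  show "bij_betw (\<psi> \<circ> \<phi>) V (cube_V k)" using bij assms(1) by (rule bij_betw_trans)
  fix u v assume uv: "u \<in> V" "v \<in> V"
  then have "\<psi> (\<phi> u) \<in> cube_V k" "\<psi> (\<phi> v) \<in> cube_V k"
    using assms(1) coord_in_W by (auto simp: bij_betw_def)
  moreover have "card (symdiff (\<psi> (\<phi> u)) (\<psi> (\<phi> v))) = card (symdiff (\<phi> u) (\<phi> v))"
    using assms(2) coord_in_W uv by blast
  ultimately show "E u v \<longleftrightarrow> cube_E k ((\<psi> \<circ> \<phi>) u) ((\<psi> \<circ> \<phi>) v)"
    using adj_iff[OF uv] by (simp add: cube_E_iff)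
qed

end

section \<open>Bent walks in a family of sets\<close>

definition step :: "(nat \<Rightarrow> 'a set) \<Rightarrow> nat \<Rightarrow> 'a set" where
  "step w j = symdiff (w j) (w (Suc j))"

text \<open>A walk \<open>w 0, \<dots>, w M\<close> in \<open>W\<close> along unit steps, no two consecutive steps of which
  span a square of \<open>W\<close>.\<close>

definition bent_walk :: "'a set set \<Rightarrow> (nat \<Rightarrow> 'a set) \<Rightarrow> nat \<Rightarrow> bool" where
  "bent_walk W w M \<longleftrightarrow> (\<forall>j\<le>M. w j \<in> W) \<and> (\<forall>j<M. card (step w j) = 1) \<and>
     (\<forall>j. Suc j < M \<longrightarrow> symdiff (w j) (step w (Suc j)) \<notin> W)"

definition square_closed :: "'a set set \<Rightarrow> bool" where
  "square_closed W \<longleftrightarrow> (\<forall>p a b. p \<in> W \<longrightarrow> symdiff p {a} \<in> W \<longrightarrow> symdiff p {b} \<in> W \<longrightarrow>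
     symdiff (symdiff p {a}) {b} \<in> W)"

lemma bent_walkD:
  assumes "bent_walk W w M"
  shows "j \<le> M \<Longrightarrow> w j \<in> W" "j < M \<Longrightarrow> card (step w j) = 1"
    "Suc j < M \<Longrightarrow> symdiff (w j) (step w (Suc j)) \<notin> W"
  using assms unfolding bent_walk_def by auto

lemma symdiff_eq_Union_steps:
  assumes "inj_on (step w) {i..<j}" "\<forall>t<j. card (step w t) = 1" "i \<le> j"
  shows "symdiff (w i) (w j) = \<Union> (step w ` {i..<j})"
  using assms(3,1,2)
proof (induction j)
  case (Suc j)
  show ?case
  proof (cases "i = Suc j")
    case False
    then have "i \<le> j" using Suc.prems by simp
    moreover have "inj_on (step w) {i..<j}" using Suc.prems(2) by (rule inj_on_subset) auto
    ultimately have IH: "symdiff (w i) (w j) = \<Union> (step w ` {i..<j})" using Suc by simp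
    obtain c where c: "step w j = {c}" using Suc.prems(3) card_1_singletonE by blast
    have "c \<notin> \<Union> (step w ` {i..<j})"
    proof
      assume "c \<in> \<Union> (step w ` {i..<j})"
      then obtain t where t: "t \<in> {i..<j}" "c \<in> step w t" by blast
      with Suc.prems(3) have "step w t = step w j"
        using c by (metis card_1_singletonE atLeastLessThan_iff less_SucI singletonD)
      moreover have "t \<in> {i..<Suc j}" "j \<in> {i..<Suc j}" using t(1) \<open>i \<le> j\<close> by auto
      ultimately have "t = j" using Suc.prems(2) by (auto dest: inj_onD)
      then show False using t(1) by simp
    qed
    have "symdiff (w i) (w (Suc j)) = symdiff (symdiff (w i) (w j)) (step w j)"
      unfolding step_def by (simp add: symdiff_assoc)
    also have "\<dots> = insert c (\<Union> (step w ` {i..<j}))"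
      using IH c \<open>c \<notin> _\<close> by (simp add: symdiff_singleton_notin)
    also have "\<dots> = \<Union> (step w ` {i..<Suc j})" using c \<open>i \<le> j\<close> by (auto simp: atLeastLessThanSuc)
    finally show ?thesis .
  qed simp
qed simp

lemma step_shift: "step (\<lambda>t. w (s + t)) t = step w (s + t)"
  unfolding step_def by simp

lemma bent_walk_shift:
  assumes "bent_walk W w M" "s \<le> M"
  shows "bent_walk W (\<lambda>t. w (s + t)) (M - s)"
  unfolding bent_walk_def step_shift
proof (intro conjI allI impI)
  fix j assume "Suc j < M - s"
  then have "Suc (s + j) < M" by simp
  then show "symdiff (w (s + j)) (step w (s + Suc j)) \<notin> W" using bent_walkD(3)[OF assms(1)] by simp
qed (use bent_walkD[OF assms(1)] assms(2) in auto)

text \<open>If \<open>w j \<triangle> {e}\<close> is in \<open>W\<close> but \<open>w (j + 1) \<triangle> {e}\<close> is not, where \<open>{e}\<close> is the later step \<open>r\<close>,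
  then the walk \<open>w j \<triangle> {e}, w j, \<dots>, w (r + 1)\<close> is a shorter bent walk whose first and last
  steps are both \<open>{e}\<close>.\<close>

lemma bent_walk_detour:
  assumes bent: "bent_walk W w M" and inj: "inj_on (step w) {..<M - 1}"
    and j: "1 \<le> j" "j < r" and r: "r < M - 1" and e: "step w r = {e}"
    and in_W: "symdiff (w j) {e} \<in> W" and not_in_W: "symdiff (w (Suc j)) {e} \<notin> W"
  obtains w' M' where "M' < M" "2 \<le> M'" "bent_walk W w' M'"
    "inj_on (step w') {..<M' - 1}" "step w' 0 = step w' (M' - 1)"
proof -
  define g where "g t = (if t = 0 then r else j + t - 1)" for t
  define w' where "w' t = (if t = 0 then symdiff (w j) {e} else w (j + t - 1))" for t
  define M' where "M' = r - j + 2"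
  have step': "step w' t = step w (g t)" for t
  proof (cases "t = 0")
    case True
    then show ?thesis using e unfolding step_def w'_def g_def by (auto simp: symdiff_def)
  next
    case False
    then show ?thesis unfolding step_def w'_def g_def by simp
  qed
  have "inj_on g {..<M' - 1}" using j unfolding g_def M'_def by (auto simp: inj_on_def)
  moreover have "g ` {..<M' - 1} \<subseteq> {..<M - 1}" using j r unfolding g_def M'_def by auto
  ultimately have "inj_on (step w \<circ> g) {..<M' - 1}"
    using inj by (blast intro: comp_inj_on inj_on_subset)
  moreover have "step w' = step w \<circ> g" using step' by (simp add: fun_eq_iff)
  ultimately have "inj_on (step w') {..<M' - 1}" by simp
  moreover have "bent_walk W w' M'"
    unfolding bent_walk_def step'
  proof (intro conjI allI impI)
    fix t assume "t \<le> M'"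
    then show "w' t \<in> W" using in_W bent_walkD(1)[OF bent, of "j + t - 1"] j r
      unfolding w'_def M'_def by auto
  next
    fix t assume "t < M'"
    then show "card (step w (g t)) = 1" using e bent_walkD(2)[OF bent, of "j + t - 1"] j r
      unfolding g_def M'_def by auto
  next
    fix t assume t: "Suc t < M'"
    show "symdiff (w' t) (step w (g (Suc t))) \<notin> W"
    proof (cases "t = 0")
      case True
      have "symdiff (w' 0) (step w j) = symdiff (w (Suc j)) {e}"
        unfolding w'_def step_def by (auto simp: symdiff_def)
      then show ?thesis using True not_in_W unfolding g_def by simp
    next
      case False
      then show ?thesis using bent_walkD(3)[OF bent, of "j + t - 1"] t j r
        unfolding w'_def g_def M'_def by auto
    qed
  qed
  moreover have "step w' 0 = step w' (M' - 1)" using j unfolding step' g_def M'_def by simp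
  moreover have "M' < M" "2 \<le> M'" using j r unfolding M'_def by auto
  ultimately show ?thesis using that by blast
qed

lemma bent_walk_repeat_geodesic_step:
  assumes geo: "geodesic_boundaries W" and bent: "bent_walk W w M" and "3 \<le> M"
    and inj: "inj_on (step w) {..<M - 1}" and rep: "step w 0 = step w (M - 1)"
  obtains r e where "1 < r" "r < M - 1" "step w r = {e}" "symdiff (w 1) {e} \<in> W"
proof -
  note steps = bent_walkD[OF bent]
  obtain a where a: "step w 0 = {a}" using steps(2)[of 0] \<open>3 \<le> M\<close> card_1_singletonE by auto
  have "symdiff (w 0) (w 1) = {a}" using a unfolding step_def by simp
  then have w0: "symdiff (w 1) {a} = w 0" by (metis symdiff_eq_iff symdiff_cancel(2))
  have "Suc (M - 1) = M" using \<open>3 \<le> M\<close> by simp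
  then have "symdiff (w (M - 1)) (w M) = {a}" using a rep unfolding step_def by metis
  then have wM: "symdiff (w (M - 1)) {a} = w M" by (metis symdiff_eq_iff)
  have S: "symdiff (w 1) (w (M - 1)) = \<Union> (step w ` {1..<M - 1})"
    using inj steps(2) \<open>3 \<le> M\<close> by (intro symdiff_eq_Union_steps) (auto intro: inj_on_subset)
  have one_step: "step w t = {c}" if "t \<in> {1..<M - 1}" "c \<in> step w t" for t c
  proof -
    have "t < M" using that(1) by (simp, linarith)
    then have "card (step w t) = 1" using steps(2) by blast
    with that(2) show ?thesis by (metis card_1_singletonE singletonD)
  qed
  have "a \<notin> symdiff (w 1) (w (M - 1))"
  proof
    assume "a \<in> symdiff (w 1) (w (M - 1))"
    then obtain t where t: "t \<in> {1..<M - 1}" "a \<in> step w t" using S by auto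
    then have "step w t = step w 0" using one_step a by simp
    then show False using inj t(1) by (auto dest: inj_onD)
  qed
  moreover have "w 1 \<noteq> w (M - 1)"
  proof
    assume "w 1 = w (M - 1)"
    then have "step w 1 = {}" using S \<open>3 \<le> M\<close> by auto
    then show False using steps(2)[of 1] \<open>3 \<le> M\<close> by simp
  qed
  moreover have "w 1 \<in> W" "w (M - 1) \<in> W" "w 0 \<in> W" "w M \<in> W"
    using steps(1) \<open>3 \<le> M\<close> by auto
  ultimately obtain e where e: "e \<in> symdiff (w 1) (w (M - 1))" "symdiff (w 1) {e} \<in> W"
    "symdiff (symdiff (w 1) {e}) {a} \<in> W"
    using geodesic_boundariesD[OF geo, of "w 1" a "w (M - 1)"] w0 wM by auto
  from e(1) S obtain r where r: "r \<in> {1..<M - 1}" "e \<in> step w r" by auto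
  then have "step w r = {e}" by (rule one_step)
  have "r \<noteq> 1"
  proof
    assume "r = 1"
    then have "symdiff (w 0) (step w 1) = symdiff (symdiff (w 1) {e}) {a}"
      using \<open>step w r = {e}\<close> w0[symmetric] by (auto simp: symdiff_def)
    then show False using steps(3)[of 0] e(3) \<open>3 \<le> M\<close> by simp
  qed
  then have "1 < r" "r < M - 1" using r(1) by auto
  then show ?thesis using that \<open>step w r = {e}\<close> e(2) by blast
qed

lemma bent_walk_no_repeat:
  assumes geo: "geodesic_boundaries W"
  shows "\<lbrakk>2 \<le> M; bent_walk W w M; inj_on (step w) {..<M - 1}\<rbrakk> \<Longrightarrow> step w 0 \<noteq> step w (M - 1)"
proof (induction M arbitrary: w rule: less_induct)
  case (less M w)
  note steps = bent_walkD[OF less.prems(2)]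
  show ?case
  proof
    assume rep: "step w 0 = step w (M - 1)"
    show False
    proof (cases "M = 2")
      case True
      then have "step w 1 = step w 0" using rep by simp
      then have "symdiff (w 0) (step w 1) = w 1" unfolding step_def by simp
      then show False using steps(1)[of 1] steps(3)[of 0] True by simp
    next
      case False
      then have "3 \<le> M" using less.prems(1) by simp
      then obtain r e where r: "1 < r" "r < M - 1" and e: "step w r = {e}"
        and w1: "symdiff (w 1) {e} \<in> W"
        using bent_walk_repeat_geodesic_step[OF geo less.prems(2) _ less.prems(3) rep] by blast
      have "symdiff (w (Suc i)) {e} \<in> W" if "Suc i < r" for i
        using that
      proof (induction i)
        case (Suc i)
        then have IH: "symdiff (w (Suc i)) {e} \<in> W" by simp
        show ?case
        proof (rule ccontr)
          assume not_in_W: "symdiff (w (Suc (Suc i))) {e} \<notin> W"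
          have "1 \<le> Suc i" "Suc i < r" using Suc.prems by simp_all
          then obtain w' M' where "M' < M" "2 \<le> M'" "bent_walk W w' M'"
            "inj_on (step w') {..<M' - 1}" "step w' 0 = step w' (M' - 1)"
            by (rule bent_walk_detour[OF less.prems(2,3) _ _ r(2) e IH not_in_W])
          then show False using less.IH by blast
        qed
      qed (use w1 in simp)
      from this[of "r - 2"] have "symdiff (w (r - 1)) (step w r) \<in> W" using r e
        by (simp add: Suc_diff_Suc numeral_2_eq_2)
      moreover have "Suc (r - 1) < M" using r by simp
      ultimately show False using steps(3)[of "r - 1"] r by simp
    qed
  qed
qed

text \<open>Translation by \<open>w1 \<triangle> w2\<close> matches the neighbours of \<open>w1\<close> with those neighbours of \<open>w2\<close>
  whose translate lies in \<open>W\<close>; as \<open>w0\<close> is an unmatched neighbour of \<open>w1\<close>, regularity leaves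
  an unmatched neighbour of \<open>w2\<close>.\<close>

lemma regular_unmatched_neighbour:
  assumes fin: "finite W" and reg: "regular W (\<lambda>p q. card (symdiff p q) = 1) k"
    and w: "w0 \<in> W" "w1 \<in> W" "w2 \<in> W" "card (symdiff w0 w1) = 1"
    and not_in_W: "symdiff w0 (symdiff w1 w2) \<notin> W"
  obtains w3 where "w3 \<in> W" "card (symdiff w2 w3) = 1" "symdiff w1 (symdiff w2 w3) \<notin> W"
proof -
  define A where "A = symdiff w1 w2"
  define N1 where "N1 = {q \<in> W. card (symdiff w1 q) = 1}"
  define N2 where "N2 = {q \<in> W. card (symdiff w2 q) = 1}"
  define P where "P = {x. symdiff x A \<in> W}"
  have "bij_betw (\<lambda>x. symdiff x A) (N1 \<inter> P) (N2 \<inter> P)"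
  proof (rule bij_betw_byWitness[where f'="\<lambda>x. symdiff x A"])
    have "symdiff w2 (symdiff x A) = symdiff x w1" "symdiff w1 (symdiff x A) = symdiff x w2" for x
      unfolding A_def by (auto simp: symdiff_def)
    then show "(\<lambda>x. symdiff x A) ` (N1 \<inter> P) \<subseteq> N2 \<inter> P" "(\<lambda>x. symdiff x A) ` (N2 \<inter> P) \<subseteq> N1 \<inter> P"
      unfolding N1_def N2_def P_def by (auto simp: symdiff_commute)
  qed simp_all
  then have "card (N1 \<inter> P) = card (N2 \<inter> P)" by (rule bij_betw_same_card)
  moreover have fin_N: "finite N1" "finite N2" using fin unfolding N1_def N2_def by auto
  then have "card (N1 - P) = card N1 - card (N1 \<inter> P)" "card (N2 - P) = card N2 - card (N2 \<inter> P)"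
    by (simp_all add: card_Diff_subset_Int)
  moreover have "card N1 = k" "card N2 = k" using reg w unfolding regular_def N1_def N2_def by auto
  moreover have "w0 \<in> N1 - P" using w not_in_W unfolding N1_def P_def A_def by (simp add: symdiff_commute)
  then have "card (N1 - P) > 0" using fin_N by (auto simp: card_gt_0_iff)
  ultimately have "card (N2 - P) > 0" by simp
  then obtain w3 where "w3 \<in> N2 - P" by (auto simp: card_gt_0_iff)
  moreover have "symdiff w1 (symdiff w2 w3) = symdiff w3 A" unfolding A_def by (auto simp: symdiff_def)
  ultimately show ?thesis using that unfolding N2_def P_def by auto
qed

lemma bent_walk_snoc:
  assumes bent: "bent_walk W w M" and x: "x \<in> W" "card (symdiff (w M) x) = 1"
    and not_in_W: "symdiff (w (M - 1)) (symdiff (w M) x) \<notin> W"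
  shows "bent_walk W (w(Suc M := x)) (Suc M)"
proof -
  let ?w = "w(Suc M := x)"
  have step_old: "step ?w j = step w j" if "j < M" for j using that unfolding step_def by simp
  have step_new: "step ?w M = symdiff (w M) x" unfolding step_def by simp
  show ?thesis
    unfolding bent_walk_def
  proof (intro conjI allI impI)
    fix j assume "j \<le> Suc M"
    then show "?w j \<in> W" using x bent_walkD(1)[OF bent] by (cases "j = Suc M") auto
  next
    fix j assume "j < Suc M"
    then show "card (step ?w j) = 1"
      using x step_old step_new bent_walkD(2)[OF bent] by (cases "j = M") auto
  next
    fix j assume j: "Suc j < Suc M"
    show "symdiff (?w j) (step ?w (Suc j)) \<notin> W"
    proof (cases "Suc j = M")
      case True
      then have "?w j = w (M - 1)" "step ?w (Suc j) = symdiff (w M) x" using step_new by auto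
      then show ?thesis using not_in_W by simp
    next
      case False
      then show ?thesis using j step_old bent_walkD(3)[OF bent] by simp
    qed
  qed
qed

lemma bent_walk_last_step_fresh:
  assumes geo: "geodesic_boundaries W" and bent: "bent_walk W w (Suc M)"
    and inj: "inj_on (step w) {..<M}"
  shows "step w M \<notin> step w ` {..<M}"
proof
  assume "step w M \<in> step w ` {..<M}"
  then obtain s where s: "s < M" "step w M = step w s" by auto
  let ?v = "\<lambda>t. w (s + t)"
  have bent_v: "bent_walk W ?v (Suc M - s)" using bent_walk_shift[OF bent] s by simp
  have "inj_on (step w \<circ> (+) s) {..<Suc M - s - 1}"
    using s by (intro comp_inj_on inj_on_subset[OF inj]) auto
  moreover have "step ?v = step w \<circ> (+) s" by (simp add: fun_eq_iff step_shift)
  ultimately have "inj_on (step ?v) {..<Suc M - s - 1}" by simp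
  moreover have "step ?v 0 = step ?v (Suc M - s - 1)" using s by (simp add: step_shift)
  moreover have "2 \<le> Suc M - s" using s by simp
  ultimately show False using bent_walk_no_repeat[OF geo _ bent_v] by blast
qed

lemma long_bent_walks:
  assumes fin: "finite W" and reg: "regular W (\<lambda>p q. card (symdiff p q) = 1) k"
    and geo: "geodesic_boundaries W" and bent2: "bent_walk W w 2"
  shows "2 \<le> M \<Longrightarrow> \<exists>w. bent_walk W w M \<and> inj_on (step w) {..<M}"
proof (induction M rule: nat_induct_at_least)
  case base
  have "inj_on (step w) {..<1}" by (simp add: inj_on_def)
  then have "step w 0 \<noteq> step w 1" using bent_walk_no_repeat[OF geo _ bent2] by simp
  then have "inj_on (step w) {..<2}" by (auto simp: inj_on_def less_2_cases_iff)
  then show ?case using bent2 by blast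
next
  case (Suc M)
  then obtain w where bent: "bent_walk W w M" and inj: "inj_on (step w) {..<M}" by blast
  note steps = bent_walkD[OF bent]
  have M: "Suc (M - 2) = M - 1" "Suc (M - 1) = M" using \<open>2 \<le> M\<close> by auto
  have "card (symdiff (w (M - 2)) (w (M - 1))) = 1" using steps(2)[of "M - 2"] M unfolding step_def by simp
  moreover have "symdiff (w (M - 2)) (symdiff (w (M - 1)) (w M)) \<notin> W"
    using steps(3)[of "M - 2"] M unfolding step_def by simp
  moreover have "M - 2 \<le> M" "M - 1 \<le> M" "M \<le> M" by simp_all
  ultimately obtain x where x: "x \<in> W" "card (symdiff (w M) x) = 1"
    and not_in_W: "symdiff (w (M - 1)) (symdiff (w M) x) \<notin> W"
    using regular_unmatched_neighbour[OF fin reg steps(1) steps(1) steps(1)] by metis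
  define w' where "w' = w(Suc M := x)"
  have bent': "bent_walk W w' (Suc M)"
    unfolding w'_def using bent_walk_snoc[OF bent x not_in_W] .
  have step_old: "step w' j = step w j" if "j < M" for j using that unfolding w'_def step_def by simp
  have "inj_on (step w') {..<M}" using inj step_old inj_on_cong by (metis lessThan_iff)
  moreover have "step w' M \<notin> step w' ` {..<M}"
    using bent_walk_last_step_fresh[OF geo bent' calculation] .
  ultimately have "inj_on (step w') {..<Suc M}" by (simp add: lessThan_Suc)
  then show ?case using bent' by blast
qed

lemma square_closed_if_regular:
  assumes "finite A" "W \<subseteq> Pow A" and reg: "regular W (\<lambda>p q. card (symdiff p q) = 1) k"
    and geo: "geodesic_boundaries W"
  shows "square_closed W"
  unfolding square_closed_def
proof (intro allI impI, rule ccontr)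
  fix p a b
  assume p: "p \<in> W" "symdiff p {a} \<in> W" "symdiff p {b} \<in> W"
    and not_in_W: "symdiff (symdiff p {a}) {b} \<notin> W"
  have fin: "finite W" using assms(1,2) by (meson finite_Pow_iff finite_subset)
  define w :: "nat \<Rightarrow> _" where "w t = (if t = 0 then symdiff p {a} else if t = 1 then p else symdiff p {b})" for t
  have steps: "step w 0 = {a}" "step w 1 = {b}" unfolding w_def step_def by (auto simp: symdiff_def)
  have "bent_walk W w 2"
    unfolding bent_walk_def
  proof (intro conjI allI impI)
    fix j :: nat assume "j \<le> 2"
    then show "w j \<in> W" using p unfolding w_def by simp
  next
    fix j :: nat assume "j < 2"
    then show "card (step w j) = 1" using steps by (auto simp: less_2_cases_iff)
  next
    fix j :: nat assume "Suc j < 2"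
    then show "symdiff (w j) (step w (Suc j)) \<notin> W" using steps not_in_W by (simp add: w_def)
  qed
  then obtain v where bent: "bent_walk W v (card A + 2)" and inj: "inj_on (step v) {..<card A + 2}"
    using long_bent_walks[OF fin reg geo \<open>bent_walk W w 2\<close>, of "card A + 2"] by auto
  have "step v ` {..<card A + 2} \<subseteq> (\<lambda>i. {i}) ` A"
  proof
    fix X assume "X \<in> step v ` {..<card A + 2}"
    then obtain j where j: "j < card A + 2" "X = step v j" by auto
    then obtain c where c: "step v j = {c}" using bent_walkD(2)[OF bent] card_1_singletonE by blast
    have "v j \<in> W" "v (Suc j) \<in> W" using bent_walkD(1)[OF bent] j by auto
    moreover have "c \<in> v j \<union> v (Suc j)"
      using c symdiff_subset_Un[of "v j" "v (Suc j)"] unfolding step_def by blast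
    ultimately have "c \<in> A" using assms(2) by blast
    then show "X \<in> (\<lambda>i. {i}) ` A" using j c by auto
  qed
  then have "card (step v ` {..<card A + 2}) \<le> card ((\<lambda>i. {i}) ` A)"
    using assms(1) by (intro card_mono) auto
  also have "\<dots> \<le> card A" by (rule card_image_le[OF assms(1)])
  finally have "card (step v ` {..<card A + 2}) \<le> card A" .
  then show False using card_image[OF inj] by simp
qed

section \<open>Regular square-closed families are cubes\<close>

lemma card_directions:
  assumes "finite A" "W \<subseteq> Pow A" "regular W (\<lambda>p q. card (symdiff p q) = 1) k" "x \<in> W"
  shows "finite {i. symdiff x {i} \<in> W}" "card {i. symdiff x {i} \<in> W} = k"
proof -
  let ?D = "{i. symdiff x {i} \<in> W}"
  have "i \<in> A" if "i \<in> ?D" for i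
  proof -
    have "i \<in> x \<union> symdiff x {i}" by (auto simp: symdiff_def)
    moreover have "x \<subseteq> A" "symdiff x {i} \<subseteq> A" using assms(2,4) that by auto
    ultimately show ?thesis by blast
  qed
  then show "finite ?D" using assms(1) by (meson finite_subset subsetI)
  have "{q \<in> W. card (symdiff x q) = 1} = (\<lambda>i. symdiff x {i}) ` ?D"
  proof (intro equalityI subsetI)
    fix q assume "q \<in> {q \<in> W. card (symdiff x q) = 1}"
    then obtain i where "q \<in> W" "q = symdiff x {i}" unfolding card_symdiff_eq_1_iff by blast
    then show "q \<in> (\<lambda>i. symdiff x {i}) ` ?D" by blast
  next
    fix q assume "q \<in> (\<lambda>i. symdiff x {i}) ` ?D"
    then show "q \<in> {q \<in> W. card (symdiff x q) = 1}" by auto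
  qed
  moreover have "inj_on (\<lambda>i. symdiff x {i}) ?D" by (simp add: inj_on_def)
  ultimately have "card {q \<in> W. card (symdiff x q) = 1} = card ?D" by (simp add: card_image)
  then show "card ?D = k" using assms(3,4) unfolding regular_def by simp
qed

lemma square_closed_subcube:
  assumes "square_closed W" "v0 \<in> W" "finite S" "S \<subseteq> {i. symdiff v0 {i} \<in> W}"
  shows "symdiff v0 S \<in> W \<and> {i. symdiff v0 {i} \<in> W} \<subseteq> {i. symdiff (symdiff v0 S) {i} \<in> W}"
  using assms(3,4)
proof (induction S rule: finite_induct)
  case (insert a S)
  then have IH: "symdiff v0 S \<in> W" "symdiff (symdiff v0 S) {a} \<in> W"
    "{i. symdiff v0 {i} \<in> W} \<subseteq> {i. symdiff (symdiff v0 S) {i} \<in> W}" by auto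
  have eq: "symdiff v0 (insert a S) = symdiff (symdiff v0 S) {a}"
    using insert.hyps(2) by (auto simp: symdiff_def)
  have "{i. symdiff v0 {i} \<in> W} \<subseteq> {i. symdiff (symdiff v0 (insert a S)) {i} \<in> W}"
    using IH assms(1) unfolding eq square_closed_def by blast
  then show ?case using IH(2) eq by simp
qed (use assms(2) in auto)

lemma regular_square_closed_eq_cube:
  assumes "finite A" "W \<subseteq> Pow A" and reg: "regular W (\<lambda>p q. card (symdiff p q) = 1) k"
    and "square_closed W" "v0 \<in> W"
  defines "I \<equiv> {i. symdiff v0 {i} \<in> W}"
  shows "finite I" "card I = k" "symdiff v0 ` Pow I \<subseteq> W"
    and "\<And>x q. x \<in> symdiff v0 ` Pow I \<Longrightarrow> q \<in> W \<Longrightarrow> card (symdiff x q) = 1 \<Longrightarrow>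
      q \<in> symdiff v0 ` Pow I"
proof -
  note dirs = card_directions[OF assms(1,2) reg]
  show fin: "finite I" "card I = k" unfolding I_def using dirs \<open>v0 \<in> W\<close> by auto
  note sub = square_closed_subcube[OF \<open>square_closed W\<close> \<open>v0 \<in> W\<close>, folded I_def]
  show "symdiff v0 ` Pow I \<subseteq> W" using sub fin(1) by (auto intro: finite_subset)
  fix x q assume x: "x \<in> symdiff v0 ` Pow I" and q: "q \<in> W" "card (symdiff x q) = 1"
  then obtain S where S: "S \<subseteq> I" "x = symdiff v0 S" by auto
  from S(1) fin(1) have "finite S" by (rule finite_subset)
  with S have "x \<in> W" "I \<subseteq> {i. symdiff x {i} \<in> W}" using sub by auto
  then have I: "I = {i. symdiff x {i} \<in> W}"
    using card_subset_eq[OF dirs(1)[OF \<open>x \<in> W\<close>]] dirs(2)[OF \<open>x \<in> W\<close>] fin(2) by simp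
  obtain i where i: "q = symdiff x {i}" using q(2) unfolding card_symdiff_eq_1_iff by blast
  then have "i \<in> I" using q(1) unfolding I by simp
  moreover have "q = symdiff v0 (symdiff S {i})" using S(2) i by (simp add: symdiff_assoc)
  moreover have "symdiff S {i} \<subseteq> I" using S(1) \<open>i \<in> I\<close> by (auto simp: symdiff_def)
  ultimately show "q \<in> symdiff v0 ` Pow I" by blast
qed

lemma symdiff_Pow_cube_iso:
  assumes "finite I" "card I = k"
  obtains \<psi> where "bij_betw \<psi> (symdiff v0 ` Pow I) (cube_V k)"
    "\<And>x y. x \<in> symdiff v0 ` Pow I \<Longrightarrow> y \<in> symdiff v0 ` Pow I \<Longrightarrow>
      card (symdiff (\<psi> x) (\<psi> y)) = card (symdiff x y)"
proof -
  obtain g where "bij_betw g I {..<k}"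
    using ex_bij_betw_finite_nat[OF assms(1)] assms(2) by (auto simp: atLeast0LessThan)
  then have g: "inj_on g I" "bij_betw (image g) (Pow I) (cube_V k)"
    unfolding cube_V_def by (simp add: bij_betw_def, rule bij_betw_image_Pow)
  define \<psi> where "\<psi> = image g \<circ> (\<lambda>x. symdiff x v0)"
  have "bij_betw (\<lambda>x. symdiff x v0) (symdiff v0 ` Pow I) (Pow I)"
    by (rule bij_betw_byWitness[where f'="symdiff v0"]) (auto simp: symdiff_commute)
  then have "bij_betw \<psi> (symdiff v0 ` Pow I) (cube_V k)"
    unfolding \<psi>_def using g(2) by (rule bij_betw_trans)
  moreover have "card (symdiff (\<psi> x) (\<psi> y)) = card (symdiff x y)"
    if "x \<in> symdiff v0 ` Pow I" "y \<in> symdiff v0 ` Pow I" for x y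
  proof -
    let ?X = "symdiff x v0" and ?Y = "symdiff y v0"
    have sub: "?X \<subseteq> I" "?Y \<subseteq> I" using that by (auto simp: symdiff_commute)
    have "g ` (?X - ?Y) = g ` ?X - g ` ?Y" "g ` (?Y - ?X) = g ` ?Y - g ` ?X"
      using sub by (auto intro!: inj_on_image_set_diff[OF g(1)])
    then have "symdiff (g ` ?X) (g ` ?Y) = g ` symdiff ?X ?Y"
      by (simp only: symdiff_def[of "g ` ?X"] symdiff_def[of ?X ?Y] image_Un)
    moreover have "card (g ` symdiff ?X ?Y) = card (symdiff ?X ?Y)"
      using sub by (intro card_image inj_on_subset[OF g(1)]) (auto simp: symdiff_def)
    moreover have "symdiff ?X ?Y = symdiff x y" by (auto simp: symdiff_def)
    ultimately show ?thesis unfolding \<psi>_def by simp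
  qed
  ultimately show ?thesis using that by blast
qed

theorem theorem1p2:
  fixes V :: "'a set" and E :: "'a \<Rightarrow> 'a \<Rightarrow> bool" and k :: nat
  assumes "simple_graph V E"
    and "V \<noteq> {}"
    and "almost_median V E"
  shows "regular V E k \<longleftrightarrow> graph_iso V E (cube_V k) (cube_E k)"
proof
  assume "graph_iso V E (cube_V k) (cube_E k)"
  then show "regular V E k" using regular_iso_iff regular_cube unfolding graph_iso_def by blast
next
  assume "regular V E k"
  obtain \<phi> W n where "cube_coords V E \<phi> W n"
    using partial_cube_coords assms(1,3) unfolding almost_median_def by blast
  then interpret cube_coords V E \<phi> W n .
  have W: "finite {..<n}" "W \<subseteq> Pow {..<n}" using W_subset by (simp_all add: cube_V_def)
  have reg: "regular W (\<lambda>p q. card (symdiff p q) = 1) k"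
    using \<open>regular V E k\<close> regular_iff_regular_W by blast
  have "square_closed W"
    using square_closed_if_regular[OF W reg geodesic_boundaries_W[OF assms(3)]] .
  obtain v0 where "v0 \<in> W" using assms(2) coord_in_W by blast
  define I where "I = {i. symdiff v0 {i} \<in> W}"
  note cube = regular_square_closed_eq_cube[OF W reg \<open>square_closed W\<close> \<open>v0 \<in> W\<close>, folded I_def]
  have "v0 \<in> symdiff v0 ` Pow I" by (metis Pow_bottom image_eqI symdiff_empty(1))
  then have "W = symdiff v0 ` Pow I"
    using W_eq_if_closed assms(3) cube(3,4) unfolding almost_median_def partial_cube_def by blast
  moreover obtain \<psi> where "bij_betw \<psi> (symdiff v0 ` Pow I) (cube_V k)"
    "\<And>x y. x \<in> symdiff v0 ` Pow I \<Longrightarrow> y \<in> symdiff v0 ` Pow I \<Longrightarrow>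
      card (symdiff (\<psi> x) (\<psi> y)) = card (symdiff x y)"
    using symdiff_Pow_cube_iso[OF cube(1,2)] by blast
  ultimately show "graph_iso V E (cube_V k) (cube_E k)" using graph_iso_cubeI by simp
qed
end
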